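(* Fix $m\ge 2$. Assume that for all parameters $(s,c,k)$ an $m$-wise merger $\mathrm{mw\_merge}^s_{(c,k)}$ of order $(c,k)$ on $s$ inputs (over $X\cup\{\bot\}$) is given. Define recursively, for $1\le k\le n$, the generalized comparator network $\mathrm{mw\_sel}^n_k$ on input $\bar x\in X^n$ as follows. If $k=1$: output $\max^n(\bar x)$. If $k\ge 2$: choose integers $n_1\ge\dots\ge n_m\ge 0$ with $\sum_i n_i=n$ and $n_1<n$. Let $\bar x^1$ be the first $n_1$ elements of $\bar x$, $\bar x^2$ the next $n_2$ elements, and so on. For each row $1\le j\le n_1$ let $m'_j=\max\{i:n_i\ge j\}$ and let $\bar y^j=\mathrm{sort}^{m'_j}(\langle x^1_j,\dots,x^{m'_j}_j\rangle)$. For each $1\le i\le m$ let $k_i=\min(n_1,\lfloor k/i\rfloor)$, $l_i=\min(n_i,\lfloor k/i\rfloor)$ (so $k_i\ge l_i$), let $\bar t^i=\langle y^1_i,\dots,y^{n_i}_i\rangle$ and $\bar z^i=\mathrm{mw\_sel}^{n_i}_{l_i}(\bar t^i)$ (with $\bar z^i=\bar t^i$ if $l_i=0$). Let $s=\sum_i k_i$, $c=k_1$, $\overline{out}=\mathrm{suff}(l_1+1,\bar z^1)::\dots::\mathrm{suff}(l_m+1,\bar z^m)$, and $\overline{res}=\mathrm{mw\_merge}^s_{(c,k)}(\langle \mathrm{pref}(l_1,\bar z^1)::\bot^{k_1-l_1},\dots,\mathrm{pref}(l_m,\bar z^m)::\bot^{k_m-l_m}\rangle)$. Output $\mathrm{drop}(\bot,\overline{res})::\overline{out}$.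 Then for every choice of the splittings, $\mathrm{mw\_sel}^n_k$ is a $k$-selection network, i.e. for every $\bar x\in X^n$ the output $\mathrm{mw\_sel}^n_k(\bar x)$ is top $k$ sorted.
   Context: $X$ is a totally ordered set; $\bot\notin X$ is an auxiliary element with $\bot<x$ for all $x\in X$. A sequence is sorted if it is non-increasing. For $\bar x=\langle x_1,\dots,x_n\rangle$: $\bar x::\bar y$ is concatenation; $\mathrm{pref}(i,\bar x)=\langle x_1,\dots,x_i\rangle$, $\mathrm{suff}(i,\bar x)=\langle x_i,\dots,x_n\rangle$ (empty if $i>n$); $\bot^r$ is the sequence of $r$ copies of $\bot$; $\mathrm{drop}(b,\bar x)$ removes all occurrences of $b$ from $\bar x$. $\mathrm{sort}^p$ rearranges $p$ values into non-increasing order (a $p$-sorter). A (generalized) comparator network is a map on sequences obtained by composing sorters applied to chosen positions and fixed rearrangements of positions; in particular it permutes its input. $\max^n$ denotes a comparator network on $n$ inputs whose first output is the maximum of its inputs. A sequence $\bar x\in X^n$ is top $k$ sorted ($k\le n$) if $\langle x_1,\dots,x_k\rangle$ is sorted and $x_i\ge x_j$ for all $i\le k<j$. A $k$-selection network on $n$ inputs is a comparator network whose output is top $k$ sorted for every input. $m$-wise tuple: let $c,k,m\in\mathbb{N}$, $1\le k$, $k/m\le c$, $k_i=\min(c,\lfloor k/i\rfloor)$; a tuple $\langle\bar x^1,\dots,\bar x^m\rangle$ with $\bar x^i$ of length $k_i$ is $m$-wise of order $(c,k)$ if every $\bar x^i$ is sorted and $x^i_j\ge x^{i+1}_j$ for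 all $1\le i<m$, $1\le j\le|\bar x^{i+1}|$. An $m$-wise merger of order $(c,k)$ on $s$ inputs is a comparator network $f$ such that for every $m$-wise tuple $T=\langle\bar x^1,\dots,\bar x^m\rangle$ of order $(c,k)$ with $\sum_i|\bar x^i|=s$, $f(\bar x^1::\dots::\bar x^m)$ is top $k$ sorted. *)

theory Defs
  imports Complex_Main "HOL-Library.Option_ord"
begin

(* The auxiliary element \<bot> is modelled by None in 'a option; Option_ord gives None < Some x. *)

definition sorted_desc :: "'a::linorder list \<Rightarrow> bool" where
  "sorted_desc xs \<longleftrightarrow> sorted_wrt (\<lambda>a b. a \<ge> b) xs"

text \<open>Top k sorted (k \<le> length is the intended use).\<close>
definition top_k_sorted :: "nat \<Rightarrow> 'a::linorder list \<Rightarrow> bool" where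
  "top_k_sorted k xs \<longleftrightarrow> sorted_desc (take k xs) \<and>
     (\<forall>i j. i < k \<and> k \<le> j \<and> j < length xs \<longrightarrow> xs ! i \<ge> xs ! j)"

text \<open>Generalized comparator networks (syntax): a sequence of steps, each either a
 sorter applied to a list of (distinct) positions, or a fixed rearrangement of positions.\<close>
datatype cstep = Sorter "nat list" | Rearr "nat list"
type_synonym cnet = "cstep list"

definition apply_step :: "cstep \<Rightarrow> 'a::linorder list \<Rightarrow> 'a list" where
  "apply_step st xs = (case st of
     Sorter ps \<Rightarrow>
       (if distinct ps \<and> (\<forall>p\<in>set ps. p < length xs)
        then foldl (\<lambda>ys (p, v). ys[p := v]) xs (zip ps (rev (sort (map ((!) xs) ps))))
        else xs)
   | Rearr p \<Rightarrow>
       (if distinct p \<and> set p = {..<length xs} then map ((!) xs) p else xs))"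

definition run_net :: "cnet \<Rightarrow> 'a::linorder list \<Rightarrow> 'a list" where
  "run_net N xs = fold apply_step N xs"

text \<open>m-wise tuples of order (c,k) (indices 1-based as in the paper).\<close>
definition mwise_tuple :: "nat \<Rightarrow> nat \<Rightarrow> nat \<Rightarrow> 'b::linorder list list \<Rightarrow> bool" where
  "mwise_tuple m c k T \<longleftrightarrow> 1 \<le> k \<and> real k / real m \<le> real c \<and> length T = m \<and>
     (\<forall>i\<in>{1..m}. length (T ! (i - 1)) = min c (k div i)) \<and>
     (\<forall>i\<in>{1..m}. sorted_desc (T ! (i - 1))) \<and>
     (\<forall>i. 1 \<le> i \<and> i < m \<longrightarrow>
        (\<forall>j\<in>{1..length (T ! i)}. T ! (i - 1) ! (j - 1) \<ge> T ! i ! (j - 1)))"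

definition is_mw_merger :: "'b::linorder itself \<Rightarrow> nat \<Rightarrow> nat \<Rightarrow> nat \<Rightarrow> nat \<Rightarrow> cnet \<Rightarrow> bool" where
  "is_mw_merger _ m c k s N \<longleftrightarrow>
     (\<forall>T :: 'b list list. mwise_tuple m c k T \<and> sum_list (map length T) = s \<longrightarrow>
        top_k_sorted k (run_net N (concat T)))"

definition valid_split :: "nat \<Rightarrow> nat \<Rightarrow> nat list \<Rightarrow> bool" where
  "valid_split m n ns \<longleftrightarrow> length ns = m \<and> sorted_wrt (\<lambda>a b. a \<ge> b) ns \<and>
     sum_list ns = n \<and> ns ! 0 < n"

fun blocks :: "nat list \<Rightarrow> 'a list \<Rightarrow> 'a list list" where
  "blocks [] xs = []"
| "blocks (a # as) xs = take a xs # blocks as (drop a xs)"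

definition mprime :: "nat list \<Rightarrow> nat \<Rightarrow> nat" where
  "mprime ns j = Max {i. 1 \<le> i \<and> i \<le> length ns \<and> j \<le> ns ! (i - 1)}"

definition yrow :: "nat list \<Rightarrow> 'a::linorder list \<Rightarrow> nat \<Rightarrow> 'a list" where
  "yrow ns xs j = rev (sort (map (\<lambda>i. blocks ns xs ! (i - 1) ! (j - 1)) [1..<mprime ns j + 1]))"

definition tcol :: "nat list \<Rightarrow> 'a::linorder list \<Rightarrow> nat \<Rightarrow> 'a list" where
  "tcol ns xs i = map (\<lambda>j. yrow ns xs j ! (i - 1)) [1..<ns ! (i - 1) + 1]"

definition kval :: "nat list \<Rightarrow> nat \<Rightarrow> nat \<Rightarrow> nat" where
  "kval ns k i = min (ns ! 0) (k div i)"

definition lval :: "nat list \<Rightarrow> nat \<Rightarrow> nat \<Rightarrow> nat" where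
  "lval ns k i = min (ns ! (i - 1)) (k div i)"

text \<open>The recursive step (k \<ge> 2), given the splitting ns and the subnetworks G i
 (G i plays the role of mw_sel^{n_i}_{l_i}).\<close>
definition mw_step :: "nat \<Rightarrow> (nat \<Rightarrow> nat \<Rightarrow> nat \<Rightarrow> cnet) \<Rightarrow> nat list \<Rightarrow> nat \<Rightarrow>
    (nat \<Rightarrow> 'a::linorder list \<Rightarrow> 'a list) \<Rightarrow> 'a list \<Rightarrow> 'a list" where
  "mw_step m mw_merge ns k G xs =
    (let z = (\<lambda>i. if lval ns k i = 0 then tcol ns xs i else G i (tcol ns xs i));
         s = (\<Sum>i=1..m. kval ns k i);
         c = kval ns k 1;
         out = concat (map (\<lambda>i. drop (lval ns k i) (z i)) [1..<m+1]);
         res = run_net (mw_merge s c k)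
                 (concat (map (\<lambda>i. map Some (take (lval ns k i) (z i))
                                    @ replicate (kval ns k i - lval ns k i) None) [1..<m+1]))
     in map the (filter (\<lambda>x. x \<noteq> None) res) @ out)"

text \<open>mw_sel m mw_merge n k F: F is one of the networks mw_sel^n_k obtainable by the
 recursive construction, for some choice of the splittings (at every node) and of the
 max-networks.\<close>
inductive mw_sel :: "nat \<Rightarrow> (nat \<Rightarrow> nat \<Rightarrow> nat \<Rightarrow> cnet) \<Rightarrow> nat \<Rightarrow> nat \<Rightarrow>
    ('a::linorder list \<Rightarrow> 'a list) \<Rightarrow> bool" for m mw_merge where
  base: "1 \<le> n \<Longrightarrow> (\<forall>xs :: 'a list. length xs = n \<longrightarrow> hd (run_net N xs) = Max (set xs)) \<Longrightarrow>
         mw_sel m mw_merge n 1 (run_net N)"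
| step: "2 \<le> k \<Longrightarrow> k \<le> n \<Longrightarrow> valid_split m n ns \<Longrightarrow>
         (\<forall>i\<in>{1..m}. 1 \<le> lval ns k i \<longrightarrow> mw_sel m mw_merge (ns ! (i - 1)) (lval ns k i) (G i)) \<Longrightarrow>
         mw_sel m mw_merge n k (mw_step m mw_merge ns k G)"

end

theory Submission
  imports Defs "HOL-Library.Multiset"
begin

text \<open>
  Everything is measured by counting: in a top \<open>l\<close> sorted list, the entry at a position
  \<open>p < l\<close> is at least \<open>v\<close> as soon as \<open>p + 1\<close> entries are at least \<open>v\<close>. Sorting the rows
  of the splitting makes every column dominate the next one entrywise, so for each \<open>v\<close> the
  number of entries \<open>\<ge> v\<close> decreases from column to column, and comparator networks, being
  permutations, preserve these numbers. Two consequences follow. The padded prefixes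
  \<open>pref(l\<^sub>i, z\<^sup>i)\<close> inherit the domination, so they form an \<open>m\<close>-wise tuple and the merger
  returns them top \<open>k\<close> sorted. An element left in \<open>suff(l\<^sub>i + 1, z\<^sup>i)\<close> lies below
  \<open>\<lfloor>k/i\<rfloor> + 1\<close> entries of column \<open>i\<close>, hence below \<open>min (\<lfloor>k/i\<rfloor> + 1) \<lfloor>k/i'\<rfloor>\<close> entries of
  each prefix \<open>i' \<le> i\<close>; these minima add up to at least \<open>k\<close>, so every element of \<open>out\<close>
  lies below the first \<open>k\<close> outputs of the merger.
\<close>

section \<open>Counting the entries above a value\<close>

definition count_ge :: "'a::linorder \<Rightarrow> 'a list \<Rightarrow> nat" where
  "count_ge v xs = length (filter (\<lambda>a. v \<le> a) xs)"

lemma count_ge_mset_eq: "mset xs = mset ys \<Longrightarrow> count_ge v xs = count_ge v ys"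
  unfolding count_ge_def by (metis mset_filter size_mset)

lemma count_ge_eq_card: "count_ge v xs = card {q. q < length xs \<and> v \<le> xs ! q}"
  unfolding count_ge_def by (rule length_filter_conv_card)

lemma count_ge_append [simp]: "count_ge v (xs @ ys) = count_ge v xs + count_ge v ys"
  unfolding count_ge_def by simp

lemma count_ge_le_length: "count_ge v xs \<le> length xs"
  unfolding count_ge_def by simp

lemma count_ge_concat_map_upt:
  "count_ge v (concat (map f [a..<b])) = (\<Sum>i = a..<b. count_ge v (f i))"
  by (induction b) (auto simp: atLeastLessThanSuc count_ge_def)

lemma top_k_sorted_iff:
  "top_k_sorted k xs \<longleftrightarrow> sorted_desc (take k xs) \<and>
     (\<forall>a\<in>set (take k xs). \<forall>b\<in>set (drop k xs). b \<le> a)"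
proof
  assume H: "top_k_sorted k xs"
  show "sorted_desc (take k xs) \<and> (\<forall>a\<in>set (take k xs). \<forall>b\<in>set (drop k xs). b \<le> a)"
  proof (intro conjI ballI)
    show "sorted_desc (take k xs)" using H by (simp add: top_k_sorted_def)
    fix a b assume "a \<in> set (take k xs)" and "b \<in> set (drop k xs)"
    then obtain p q where "p < k" "p < length xs" "a = xs ! p" "q < length xs - k" "b = xs ! (k + q)"
      by (auto simp: in_set_conv_nth)
    then show "b \<le> a" using H unfolding top_k_sorted_def by auto
  qed
next
  assume H: "sorted_desc (take k xs) \<and> (\<forall>a\<in>set (take k xs). \<forall>b\<in>set (drop k xs). b \<le> a)"
  show "top_k_sorted k xs" unfolding top_k_sorted_def
  proof (intro conjI allI impI)
    show "sorted_desc (take k xs)" using H by simp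
    fix i j assume ij: "i < k \<and> k \<le> j \<and> j < length xs"
    have "xs ! i \<in> set (take k xs)" using ij by (auto simp: in_set_conv_nth intro!: exI[of _ i])
    moreover have "xs ! j \<in> set (drop k xs)" using ij
      by (auto simp: in_set_conv_nth intro!: exI[of _ "j - k"])
    ultimately show "xs ! j \<le> xs ! i" using H by blast
  qed
qed

lemma top_k_sorted_nth_le:
  assumes "top_k_sorted k z" "p < k" "p \<le> q" "q < length z"
  shows "z ! q \<le> z ! p"
proof (cases "q < k")
  case True
  have "sorted_wrt (\<lambda>a b. a \<ge> b) (take k z)"
    using assms(1) by (simp add: top_k_sorted_def sorted_desc_def)
  then show ?thesis using True assms
    by (metis le_eq_less_or_eq length_take min_less_iff_conj nth_take order_refl sorted_wrt_nth_less)
next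
  case False
  then show ?thesis using assms unfolding top_k_sorted_def by auto
qed

lemma top_k_sorted_nth_ge_if_count_ge:
  assumes "top_k_sorted l z" "p < l" "p < length z" "p + 1 \<le> count_ge v z"
  shows "v \<le> z ! p"
proof (rule ccontr)
  assume "\<not> v \<le> z ! p"
  have "q < p" if q: "q < length z" "v \<le> z ! q" for q
  proof (rule ccontr)
    assume "\<not> q < p"
    then have "z ! q \<le> z ! p" using top_k_sorted_nth_le[OF assms(1,2)] q by simp
    then show False using q \<open>\<not> v \<le> z ! p\<close> by simp
  qed
  then have "card {q. q < length z \<and> v \<le> z ! q} \<le> card {..<p}"
    by (intro card_mono) auto
  then show False using assms(4) by (simp add: count_ge_eq_card)
qed

lemma top_k_sorted_count_ge_nth:
  assumes "top_k_sorted l z" "p < l" "p < length z"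
  shows "p + 1 \<le> count_ge (z ! p) z"
proof -
  have "{..p} \<subseteq> {q. q < length z \<and> z ! p \<le> z ! q}"
    using top_k_sorted_nth_le[OF assms(1)] assms by force
  then have "card {..p} \<le> card {q. q < length z \<and> z ! p \<le> z ! q}"
    by (rule card_mono[rotated]) auto
  then show ?thesis by (simp add: count_ge_eq_card)
qed

lemma top_k_sorted_count_ge_take:
  assumes "top_k_sorted l z" "l \<le> length z"
  shows "min (count_ge v z) l \<le> count_ge v (take l z)"
proof (cases "\<forall>p<l. v \<le> z ! p")
  case True
  then have "filter (\<lambda>a. v \<le> a) (take l z) = take l z"
    by (auto simp: filter_id_conv in_set_conv_nth)
  then have "count_ge v (take l z) = l" using assms(2) by (simp add: count_ge_def)
  then show ?thesis by simp
next
  case False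
  then obtain p where p: "p < l" "z ! p < v" by auto
  have "\<not> v \<le> a" if a: "a \<in> set (drop l z)" for a
  proof -
    obtain q where "q < length z - l" "a = z ! (l + q)"
      using a by (auto simp: in_set_conv_nth)
    then have "a \<le> z ! p" using top_k_sorted_nth_le[OF assms(1) p(1), of "l + q"] p by auto
    then show ?thesis using p by auto
  qed
  then have "count_ge v (drop l z) = 0" by (simp add: count_ge_def filter_empty_conv)
  then have "count_ge v z = count_ge v (take l z)"
    by (metis add.right_neutral append_take_drop_id count_ge_append)
  then show ?thesis by simp
qed

lemma top_k_sorted_count_ge_drop:
  assumes "top_k_sorted l z" "l \<le> length z" "x \<in> set (drop l z)"
  shows "l + 1 \<le> count_ge x z"
proof -
  obtain q where q: "q < length z - l" "x = z ! (l + q)"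
    using assms(3) by (auto simp: in_set_conv_nth)
  have "x \<le> a" if a: "a \<in> set (take l z)" for a
  proof -
    obtain p where "p < l" "a = z ! p" using a assms(2) by (auto simp: in_set_conv_nth)
    then show ?thesis using top_k_sorted_nth_le[OF assms(1)] q by auto
  qed
  then have "count_ge x (take l z) = l" using assms(2) by (simp add: count_ge_def filter_id_conv[THEN iffD2])
  moreover have "1 \<le> count_ge x (drop l z)"
    using assms(3) unfolding count_ge_def
    by (metis One_nat_def Suc_leI filter_empty_conv length_greater_0_conv order_refl)
  ultimately show ?thesis
    by (metis add_le_mono append_take_drop_id count_ge_append le_refl)
qed

lemma top_k_sorted_append:
  assumes A: "top_k_sorted k A" "k \<le> length A"
    and dominated: "\<And>b. b \<in> set B \<Longrightarrow> k \<le> count_ge b A"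
  shows "top_k_sorted k (A @ B)"
  unfolding top_k_sorted_iff
proof (intro conjI ballI)
  show "sorted_desc (take k (A @ B))" using A by (simp add: top_k_sorted_iff)
  fix a b assume a: "a \<in> set (take k (A @ B))" and b: "b \<in> set (drop k (A @ B))"
  obtain p where p: "p < k" "p < length A" "a = A ! p" using a A(2) by (auto simp: in_set_conv_nth)
  have "b \<in> set (drop k A) \<or> b \<in> set B" using b A(2) by simp
  then show "b \<le> a"
  proof
    assume "b \<in> set (drop k A)"
    moreover have "a \<in> set (take k A)" using a A(2) by simp
    ultimately show ?thesis using A(1) unfolding top_k_sorted_iff by blast
  next
    assume "b \<in> set B"
    then have "p + 1 \<le> count_ge b A" using dominated p by fastforce
    then show ?thesis using top_k_sorted_nth_ge_if_count_ge[OF A(1) p(1,2)] p(3) by simp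
  qed
qed

lemma top_k_sorted_1_if_hd_Max:
  assumes "ys \<noteq> []" "hd ys = Max (set ys)"
  shows "top_k_sorted 1 ys"
  unfolding top_k_sorted_iff
proof (intro conjI ballI)
  show "sorted_desc (take 1 ys)" by (cases ys) (auto simp: sorted_desc_def)
  fix a b assume "a \<in> set (take 1 ys)" "b \<in> set (drop 1 ys)"
  then have "a = hd ys" "b \<in> set ys" using assms(1) by (cases ys; auto)+
  then show "b \<le> a" using assms(2) by simp
qed

lemma the_le_the_iff: "a \<noteq> None \<Longrightarrow> b \<noteq> None \<Longrightarrow> the b \<le> the a \<longleftrightarrow> b \<le> a"
  by (cases a; cases b) auto

lemma top_k_sorted_nth_not_None:
  fixes res :: "'a::linorder option list"
  assumes "top_k_sorted k res" "k \<le> length (filter (\<lambda>x. x \<noteq> None) res)" "p < k"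
  shows "res ! p \<noteq> None"
proof
  let ?P = "\<lambda>x. x \<noteq> None"
  assume None: "res ! p = None"
  have "b = None" if b: "b \<in> set (drop p res)" for b
  proof -
    obtain q where "q < length res - p" "b = res ! (p + q)" using b by (auto simp: in_set_conv_nth)
    then have "b \<le> res ! p" using top_k_sorted_nth_le[OF assms(1,3), of "p + q"] by simp
    then show ?thesis using None less_eq_option_None_is_None by metis
  qed
  then have "filter ?P res = filter ?P (take p res)"
    by (metis (mono_tags) append.right_neutral append_take_drop_id filter_append filter_empty_conv)
  then have "length (filter ?P res) \<le> p"
    by (metis length_filter_le length_take min.bounded_iff nle_le)
  then show False using assms(2,3) by simp
qed

lemma top_k_sorted_map_the_filter_not_None:
  fixes res :: "'a::linorder option list"
  assumes "top_k_sorted k res" "k \<le> length (filter (\<lambda>x. x \<noteq> None) res)"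
  shows "top_k_sorted k (map the (filter (\<lambda>x. x \<noteq> None) res))"
proof -
  let ?P = "\<lambda>x. x \<noteq> None"
  have len_res: "k \<le> length res" using assms(2) by (meson dual_order.trans length_filter_le)
  have some: "\<forall>a\<in>set (take k res). a \<noteq> None"
    using top_k_sorted_nth_not_None[OF assms] by (auto simp: in_set_conv_nth)
  then have "filter ?P (take k res) = take k res"
    by (simp add: filter_id_conv)
  then have split: "filter ?P res = take k res @ filter ?P (drop k res)"
    by (metis append_take_drop_id filter_append)
  have len_take: "length (take k res) = k" using len_res by simp
  have R: "sorted_desc (take k res) \<and> (\<forall>a\<in>set (take k res). \<forall>b\<in>set (drop k res). b \<le> a)"
    using assms(1) top_k_sorted_iff by blast
  have "take k (map the (filter ?P res)) = map the (take k res)"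
    and "drop k (map the (filter ?P res)) = map the (filter ?P (drop k res))"
    using split len_take by simp_all
  then show ?thesis
    unfolding top_k_sorted_iff
  proof (simp only:, intro conjI ballI)
    show "sorted_desc (map the (take k res))"
      unfolding sorted_desc_def sorted_wrt_map
      using R some by (auto simp: sorted_desc_def the_le_the_iff intro: sorted_wrt_mono_rel[rotated])
    fix a b assume "a \<in> set (map the (take k res))" "b \<in> set (map the (filter ?P (drop k res)))"
    then obtain a' b' where "a' \<in> set (take k res)" "a = the a'"
      "b' \<in> set (drop k res)" "b' \<noteq> None" "b = the b'" by auto
    then show "b \<le> a" using R some the_le_the_iff by metis
  qed
qed

section \<open>Comparator networks permute their input\<close>

lemma mset_foldl_list_update:
  assumes "distinct ps" "\<forall>p\<in>set ps. p < length ys" "length ps = length ws"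
  shows "length (foldl (\<lambda>ys (p, v). ys[p := v]) ys (zip ps ws)) = length ys \<and>
         mset (foldl (\<lambda>ys (p, v). ys[p := v]) ys (zip ps ws)) + mset (map ((!) ys) ps)
           = mset ys + mset ws"
  using assms
proof (induction ps arbitrary: ys ws)
  case Nil
  then show ?case by simp
next
  case (Cons p ps)
  then obtain w ws' where ws: "ws = w # ws'" by (cases ws) auto
  let ?ys = "ys[p := w]"
  have IH: "length (foldl (\<lambda>ys (p, v). ys[p := v]) ?ys (zip ps ws')) = length ?ys \<and>
         mset (foldl (\<lambda>ys (p, v). ys[p := v]) ?ys (zip ps ws')) + mset (map ((!) ?ys) ps)
           = mset ?ys + mset ws'"
    using Cons ws by auto
  have m1: "map ((!) ?ys) ps = map ((!) ys) ps"
    using Cons.prems(1) by (intro map_cong refl) (metis distinct.simps(2) nth_list_update_neq)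
  have m2: "mset ?ys + {#ys ! p#} = mset ys + {#w#}"
    using Cons.prems(2) by (simp add: mset_update insert_DiffM)
  show ?case using IH m1 m2 ws by (simp add: add.assoc)
qed

lemma mset_apply_step: "mset (apply_step st xs) = mset xs"
proof (cases st)
  case (Sorter ps)
  show ?thesis
  proof (cases "distinct ps \<and> (\<forall>p\<in>set ps. p < length xs)")
    case True
    then have "mset (foldl (\<lambda>ys (p, v). ys[p := v]) xs (zip ps (rev (sort (map ((!) xs) ps)))))
           + mset (map ((!) xs) ps) = mset xs + mset (rev (sort (map ((!) xs) ps)))"
      using mset_foldl_list_update[of ps xs "rev (sort (map ((!) xs) ps))"] by simp
    then show ?thesis using True Sorter by (simp add: apply_step_def)
  next
    case False
    then show ?thesis using Sorter by (auto simp: apply_step_def)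
  qed
next
  case (Rearr p)
  show ?thesis
  proof (cases "distinct p \<and> set p = {..<length xs}")
    case True
    then have "mset p = mset [0..<length xs]"
      by (simp add: atLeast_upt) (metis mset_set_set)
    then have "mset (map ((!) xs) p) = mset (map ((!) xs) [0..<length xs])"
      by (metis mset_map)
    then show ?thesis using True Rearr by (simp add: apply_step_def map_nth)
  next
    case False
    then show ?thesis using Rearr by (auto simp: apply_step_def)
  qed
qed

lemma mset_run_net: "mset (run_net N xs) = mset xs"
  unfolding run_net_def by (induction N arbitrary: xs) (auto simp: mset_apply_step)

section \<open>Rows and columns of a splitting\<close>

lemma mset_concat_map_upt: "mset (concat (map f [a..<b])) = (\<Sum>i = a..<b. mset (f i))"
  by (induction b) (auto simp: atLeastLessThanSuc)

lemma map_nth_upt_shift: "map (\<lambda>i. L ! (i - 1)) [1..<length L + 1] = L"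
  by (rule nth_equalityI) (simp_all del: upt_Suc)

lemma mset_map_upt_Suc: "mset (map f [1..<b + 1]) = (\<Sum>i = 1..b. {#f i#})"
proof -
  have "mset (map f [1..<b + 1]) = (\<Sum>i = 1..<b + 1. mset [f i])"
    by (metis concat_map_singleton mset_concat_map_upt)
  also have "{1..<b + 1} = {1..b}" by auto
  finally show ?thesis by simp
qed

lemma mset_eq_sum_nth: "mset L = (\<Sum>i = 1..length L. {#L ! (i - 1)#})"
  by (metis map_nth_upt_shift mset_map_upt_Suc)

lemma sum_list_le_length_mult:
  fixes ns :: "nat list"
  assumes "\<forall>i<length ns. ns ! i \<le> b"
  shows "sum_list ns \<le> length ns * b"
proof -
  have "sum_list ns = (\<Sum>i = 0..<length ns. ns ! i)" by (rule sum_list_sum_nth)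
  also have "\<dots> \<le> (\<Sum>i = 0..<length ns. b)" using assms by (intro sum_mono) auto
  finally show ?thesis by simp
qed

lemma length_blocks: "length (blocks ns xs) = length ns"
  by (induction ns arbitrary: xs) auto

lemma length_blocks_nth:
  "sum_list ns \<le> length xs \<Longrightarrow> i < length ns \<Longrightarrow> length (blocks ns xs ! i) = ns ! i"
proof (induction ns arbitrary: xs i)
  case Nil
  then show ?case by simp
next
  case (Cons a ns)
  then show ?case by (cases i) auto
qed

lemma concat_blocks: "concat (blocks ns xs) = take (sum_list ns) xs"
  by (induction ns arbitrary: xs) (auto simp: take_add)

locale split_columns =
  fixes m n :: nat and ns :: "nat list" and xs :: "'a::linorder list"
  assumes valid_split: "valid_split m n ns" and length_xs: "length xs = n"
begin

lemma length_ns: "length ns = m" and sum_list_ns: "sum_list ns = n"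
  and ns0_less: "ns ! 0 < n" and sorted_ns: "sorted_wrt (\<lambda>a b. a \<ge> b) ns"
  using valid_split by (auto simp: valid_split_def)

lemma m_pos: "1 \<le> m"
  using length_ns sum_list_ns ns0_less by (cases ns) auto

lemma ns_antimono: "i \<le> i' \<Longrightarrow> i' < m \<Longrightarrow> ns ! i' \<le> ns ! i"
  using sorted_ns length_ns by (metis le_eq_less_or_eq order_refl sorted_wrt_nth_less)

lemma ns_le_ns0: "i < m \<Longrightarrow> ns ! i \<le> ns ! 0"
  using ns_antimono by simp

lemma n_le_m_mult_ns0: "n \<le> m * ns ! 0"
  using sum_list_le_length_mult[of ns "ns ! 0"] ns_le_ns0 sum_list_ns length_ns by simp

lemma length_block: "i < m \<Longrightarrow> length (blocks ns xs ! i) = ns ! i"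
  using length_blocks_nth[of ns xs i] sum_list_ns length_xs length_ns by simp

lemma concat_blocks_xs: "concat (blocks ns xs) = xs"
  using concat_blocks[of ns xs] sum_list_ns length_xs by simp

lemma mprime_mem:
  assumes "j \<le> ns ! 0"
  shows "mprime ns j \<in> {i. 1 \<le> i \<and> i \<le> length ns \<and> j \<le> ns ! (i - 1)}"
proof -
  have "1 \<in> {i. 1 \<le> i \<and> i \<le> length ns \<and> j \<le> ns ! (i - 1)}" using assms m_pos length_ns by simp
  then show ?thesis unfolding mprime_def by (intro Max_in) auto
qed

lemma mprime_bounds: "j \<le> ns ! 0 \<Longrightarrow> 1 \<le> mprime ns j \<and> mprime ns j \<le> m"
  using mprime_mem length_ns by auto

lemma le_mprime_iff:
  assumes "j \<le> ns ! 0" "1 \<le> i" "i \<le> m"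
  shows "i \<le> mprime ns j \<longleftrightarrow> j \<le> ns ! (i - 1)"
proof
  assume "j \<le> ns ! (i - 1)"
  then show "i \<le> mprime ns j" unfolding mprime_def using assms length_ns by (intro Max_ge) auto
next
  assume i: "i \<le> mprime ns j"
  have "j \<le> ns ! (mprime ns j - 1)" using mprime_mem[OF assms(1)] by simp
  also have "\<dots> \<le> ns ! (i - 1)" using i mprime_bounds[OF assms(1)] assms by (intro ns_antimono) auto
  finally show "j \<le> ns ! (i - 1)" .
qed

text \<open>The entry \<open>x\<^sup>i\<^sub>j\<close> of the paper, 1-based in both indices.\<close>
abbreviation entry :: "nat \<Rightarrow> nat \<Rightarrow> 'a" where
  "entry i j \<equiv> blocks ns xs ! (i - 1) ! (j - 1)"

lemma length_yrow: "length (yrow ns xs j) = mprime ns j"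
  by (simp add: yrow_def)

lemma sorted_yrow: "sorted_desc (yrow ns xs j)"
  unfolding yrow_def sorted_desc_def sorted_wrt_rev by simp

lemma mset_yrow: "mset (yrow ns xs j) = (\<Sum>i = 1..mprime ns j. {#entry i j#})"
  unfolding yrow_def mset_rev mset_sort by (rule mset_map_upt_Suc)

lemma yrow_antimono:
  assumes "1 \<le> i'" "i' \<le> i" "i \<le> m" "j \<le> ns ! (i - 1)"
  shows "yrow ns xs j ! (i - 1) \<le> yrow ns xs j ! (i' - 1)"
proof -
  have "j \<le> ns ! 0" using ns_le_ns0[of "i - 1"] assms by linarith
  then have "i \<le> mprime ns j" using le_mprime_iff assms by auto
  then have "i - 1 < length (yrow ns xs j)" using assms by (simp add: length_yrow)
  then show ?thesis using sorted_yrow[of j] assms unfolding sorted_desc_def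
    by (metis diff_le_mono le_eq_less_or_eq order_refl sorted_wrt_nth_less)
qed

lemma length_tcol: "length (tcol ns xs i) = ns ! (i - 1)"
  by (simp add: tcol_def)

lemma tcol_nth: "j < ns ! (i - 1) \<Longrightarrow> tcol ns xs i ! j = yrow ns xs (j + 1) ! (i - 1)"
  by (simp add: tcol_def del: upt_Suc)

lemma mset_tcol: "mset (tcol ns xs i) = (\<Sum>j = 1..ns ! (i - 1). {#yrow ns xs j ! (i - 1)#})"
  unfolding tcol_def by (rule mset_map_upt_Suc)

lemma count_ge_tcol:
  "count_ge v (tcol ns xs i) = card {j \<in> {1..ns ! (i - 1)}. v \<le> yrow ns xs j ! (i - 1)}"
proof -
  have "count_ge v (tcol ns xs i) = card {q. q < ns ! (i - 1) \<and> v \<le> yrow ns xs (q + 1) ! (i - 1)}"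
    by (simp add: count_ge_eq_card length_tcol tcol_nth cong: conj_cong)
  also have "\<dots> = card (Suc ` {q. q < ns ! (i - 1) \<and> v \<le> yrow ns xs (q + 1) ! (i - 1)})"
    by (simp add: card_image)
  also have "Suc ` {q. q < ns ! (i - 1) \<and> v \<le> yrow ns xs (q + 1) ! (i - 1)}
      = {j \<in> {1..ns ! (i - 1)}. v \<le> yrow ns xs j ! (i - 1)}"
  proof (rule set_eqI, rule iffI)
    fix x assume "x \<in> {j \<in> {1..ns ! (i - 1)}. v \<le> yrow ns xs j ! (i - 1)}"
    then show "x \<in> Suc ` {q. q < ns ! (i - 1) \<and> v \<le> yrow ns xs (q + 1) ! (i - 1)}"
      by (intro image_eqI[of _ _ "x - 1"]) auto
  qed auto
  finally show ?thesis .
qed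

lemma count_ge_tcol_antimono:
  assumes "1 \<le> i'" "i' \<le> i" "i \<le> m"
  shows "count_ge v (tcol ns xs i) \<le> count_ge v (tcol ns xs i')"
  unfolding count_ge_tcol
proof (rule card_mono)
  have "ns ! (i - 1) \<le> ns ! (i' - 1)" using assms by (intro ns_antimono) auto
  then show "{j \<in> {1..ns ! (i - 1)}. v \<le> yrow ns xs j ! (i - 1)}
      \<subseteq> {j \<in> {1..ns ! (i' - 1)}. v \<le> yrow ns xs j ! (i' - 1)}"
    using yrow_antimono[OF assms] by (auto intro: order_trans)
qed simp

lemma sum_columns_eq_sum_rows:
  "(\<Sum>i = 1..m. \<Sum>j = 1..ns ! (i - 1). g i j) = (\<Sum>j = 1..ns ! 0. \<Sum>i = 1..mprime ns j. g i j)"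
proof -
  have "(\<Sum>i = 1..m. \<Sum>j\<in>{j \<in> {1..ns ! 0}. j \<le> ns ! (i - 1)}. g i j)
      = (\<Sum>j = 1..ns ! 0. \<Sum>i\<in>{i \<in> {1..m}. j \<le> ns ! (i - 1)}. g i j)"
    by (rule sum.swap_restrict) auto
  moreover have "{j \<in> {1..ns ! 0}. j \<le> ns ! (i - 1)} = {1..ns ! (i - 1)}" if "i \<in> {1..m}" for i
  proof -
    have "ns ! (i - 1) \<le> ns ! 0" using ns_le_ns0[of "i - 1"] that by auto
    then show ?thesis by auto
  qed
  moreover have "{i \<in> {1..m}. j \<le> ns ! (i - 1)} = {1..mprime ns j}" if j: "j \<in> {1..ns ! 0}" for j
  proof (rule set_eqI)
    show "i \<in> {i \<in> {1..m}. j \<le> ns ! (i - 1)} \<longleftrightarrow> i \<in> {1..mprime ns j}" for i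
      using le_mprime_iff[of j i] mprime_bounds[of j] j by auto
  qed
  ultimately show ?thesis by simp
qed

lemma sum_mset_tcol: "(\<Sum>i = 1..m. mset (tcol ns xs i)) = mset xs"
proof -
  have "(\<Sum>i = 1..m. mset (tcol ns xs i))
      = (\<Sum>i = 1..m. \<Sum>j = 1..ns ! (i - 1). {#yrow ns xs j ! (i - 1)#})"
    by (simp add: mset_tcol)
  also have "\<dots> = (\<Sum>j = 1..ns ! 0. \<Sum>i = 1..mprime ns j. {#yrow ns xs j ! (i - 1)#})"
    by (rule sum_columns_eq_sum_rows)
  also have "\<dots> = (\<Sum>j = 1..ns ! 0. \<Sum>i = 1..mprime ns j. {#entry i j#})"
    by (metis length_yrow mset_eq_sum_nth mset_yrow)
  also have "\<dots> = (\<Sum>i = 1..m. \<Sum>j = 1..ns ! (i - 1). {#entry i j#})"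
    by (rule sum_columns_eq_sum_rows[symmetric])
  also have "\<dots> = (\<Sum>i = 1..m. mset (blocks ns xs ! (i - 1)))"
    by (intro sum.cong refl) (metis Suc_le_eq atLeastAtMost_iff diff_Suc_1 diff_less_mono
        length_block less_Suc_eq_le mset_eq_sum_nth)
  also have "\<dots> = mset (concat (map (\<lambda>i. blocks ns xs ! (i - 1)) [1..<m + 1]))"
    by (simp add: mset_concat_map_upt atLeastLessThanSuc_atLeastAtMost del: upt_Suc)
  also have "\<dots> = mset xs"
    using map_nth_upt_shift[of "blocks ns xs"] length_blocks[of ns xs] length_ns concat_blocks_xs
    by simp
  finally show ?thesis .
qed

end

section \<open>Correctness of the recursive step\<close>

lemma le_sum_min_div:
  assumes "1 \<le> (i::nat)"
  shows "k \<le> (\<Sum>i' = 1..i. min (k div i + 1) (k div i'))"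
proof -
  let ?q = "k div i" and ?r = "k mod i"
  have r: "?r < i" using assms by simp
  have "?q + (if i' \<le> ?r then 1 else 0) \<le> min (?q + 1) (k div i')" if i': "i' \<in> {1..i}" for i'
  proof (cases "i' \<le> ?r")
    case True
    have "(?q + 1) * i' \<le> (?q + 1) * ?r" using True by (rule mult_le_mono2)
    also have "\<dots> = ?q * ?r + ?r" by (simp add: algebra_simps)
    also have "\<dots> \<le> ?q * i + ?r" by (rule add_le_mono1[OF mult_le_mono2[OF less_imp_le[OF r]]])
    also have "\<dots> = k" by (simp add: mult.commute)
    finally have "?q + 1 \<le> k div i'" using i' by (simp add: less_eq_div_iff_mult_less_eq)
    then show ?thesis using True by simp
  next
    case False
    have "?q \<le> k div i'" using i' by (simp add: div_le_mono2)
    then show ?thesis using False by simp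
  qed
  then have "(\<Sum>i' = 1..i. ?q + (if i' \<le> ?r then 1 else 0)) \<le> (\<Sum>i' = 1..i. min (?q + 1) (k div i'))"
    by (rule sum_mono)
  moreover have "{i' \<in> {1..i}. i' \<le> ?r} = {1..?r}" using r by auto
  then have "(\<Sum>i' = 1..i. ?q + (if i' \<le> ?r then 1 else 0)) = k"
    by (simp add: sum.distrib sum.If_cases Int_def mult.commute)
  ultimately show ?thesis by simp
qed

locale selection_step = split_columns m n ns xs
  for m n :: nat and ns :: "nat list" and xs :: "'a::linorder list" +
  fixes k :: nat and G :: "nat \<Rightarrow> 'a list \<Rightarrow> 'a list"
  assumes k_pos: "1 \<le> k" and k_le_n: "k \<le> n"
    and G_correct: "\<And>i ys. i \<in> {1..m} \<Longrightarrow> 1 \<le> lval ns k i \<Longrightarrow> length ys = ns ! (i - 1) \<Longrightarrow>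
      top_k_sorted (lval ns k i) (G i ys) \<and> mset (G i ys) = mset ys"
begin

text \<open>In the paper's notation \<open>col i\<close> is \<open>z\<^sup>i\<close>, \<open>padded_prefix i\<close> is \<open>pref(l\<^sub>i, z\<^sup>i)\<close>
  followed by \<open>k\<^sub>i - l\<^sub>i\<close> copies of \<open>None\<close> (the paper's \<open>\<bottom>\<close>), and \<open>col_suffixes\<close> is \<open>out\<close>.\<close>

definition col :: "nat \<Rightarrow> 'a list" where
  "col i = (if lval ns k i = 0 then tcol ns xs i else G i (tcol ns xs i))"

definition padded_prefix :: "nat \<Rightarrow> 'a option list" where
  "padded_prefix i = map Some (take (lval ns k i) (col i)) @ replicate (kval ns k i - lval ns k i) None"

definition merger_input :: "'a option list list" where
  "merger_input = map padded_prefix [1..<m + 1]"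

definition col_prefixes :: "'a list" where
  "col_prefixes = concat (map (\<lambda>i. take (lval ns k i) (col i)) [1..<m + 1])"

definition col_suffixes :: "'a list" where
  "col_suffixes = concat (map (\<lambda>i. drop (lval ns k i) (col i)) [1..<m + 1])"

lemma top_k_sorted_col:
  assumes "i \<in> {1..m}"
  shows "top_k_sorted (lval ns k i) (col i)"
proof (cases "lval ns k i = 0")
  case True
  then show ?thesis by (simp add: top_k_sorted_def sorted_desc_def)
next
  case False
  then show ?thesis using G_correct[OF assms _ length_tcol] by (simp add: col_def)
qed

lemma mset_col:
  assumes "i \<in> {1..m}"
  shows "mset (col i) = mset (tcol ns xs i)"
  using G_correct[OF assms _ length_tcol] by (simp add: col_def)

lemma length_col: "i \<in> {1..m} \<Longrightarrow> length (col i) = ns ! (i - 1)"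
  using arg_cong[OF mset_col, of i size] by (simp add: length_tcol)

lemma count_ge_col: "i \<in> {1..m} \<Longrightarrow> count_ge v (col i) = count_ge v (tcol ns xs i)"
  by (rule count_ge_mset_eq[OF mset_col])

lemma lval_le: "lval ns k i \<le> ns ! (i - 1)"
  by (simp add: lval_def)

lemma lval_le_kval:
  assumes "i \<in> {1..m}"
  shows "lval ns k i \<le> kval ns k i"
proof -
  have "ns ! (i - 1) \<le> ns ! 0" using assms by (intro ns_le_ns0) auto
  then show ?thesis by (auto simp: lval_def kval_def)
qed

lemma lval_Suc_le: "1 \<le> i \<Longrightarrow> i + 1 \<le> m \<Longrightarrow> lval ns k (i + 1) \<le> lval ns k i"
  using ns_antimono[of "i - 1" i] div_le_mono2[of i "i + 1" k] by (auto simp: lval_def)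

lemma count_ge_col_antimono:
  assumes "1 \<le> i'" "i' \<le> i" "i \<le> m"
  shows "count_ge v (col i) \<le> count_ge v (col i')"
proof -
  have i: "i \<in> {1..m}" and i': "i' \<in> {1..m}" using assms by auto
  show ?thesis
    unfolding count_ge_col[OF i] count_ge_col[OF i'] by (rule count_ge_tcol_antimono[OF assms])
qed

lemma col_Suc_nth_le:
  assumes "1 \<le> i" "i < m" "p < lval ns k (i + 1)"
  shows "col (i + 1) ! p \<le> col i ! p"
proof -
  have i: "i \<in> {1..m}" and Suc_i: "i + 1 \<in> {1..m}" using assms by auto
  have p: "p < lval ns k i" using assms lval_Suc_le[of i] by simp
  have "p + 1 \<le> count_ge (col (i + 1) ! p) (col (i + 1))"
    using top_k_sorted_count_ge_nth[OF top_k_sorted_col[OF Suc_i] assms(3)]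
      assms(3) lval_le[of "i + 1"] length_col[OF Suc_i] by simp
  also have "\<dots> \<le> count_ge (col (i + 1) ! p) (col i)"
    using assms by (intro count_ge_col_antimono) auto
  finally show ?thesis
    using top_k_sorted_nth_ge_if_count_ge[OF top_k_sorted_col[OF i] p] p lval_le[of i] length_col[OF i]
    by simp
qed

lemma merger_input_nth: "i \<in> {1..m} \<Longrightarrow> merger_input ! (i - 1) = padded_prefix i"
  by (auto simp: merger_input_def simp del: upt_Suc)

lemma length_padded_prefix: "i \<in> {1..m} \<Longrightarrow> length (padded_prefix i) = kval ns k i"
  using length_col lval_le lval_le_kval by (simp add: padded_prefix_def)

lemma padded_prefix_nth:
  assumes "i \<in> {1..m}" "p < kval ns k i"
  shows "padded_prefix i ! p = (if p < lval ns k i then Some (col i ! p) else None)"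
  using assms length_col[OF assms(1)] lval_le[of i] by (simp add: padded_prefix_def nth_append)

lemma sorted_padded_prefix:
  assumes "i \<in> {1..m}"
  shows "sorted_desc (padded_prefix i)"
  unfolding padded_prefix_def sorted_desc_def sorted_wrt_append
proof (intro conjI)
  have "sorted_wrt (\<lambda>a b. b \<le> a) (take (lval ns k i) (col i))"
    using top_k_sorted_col[OF assms] by (simp add: top_k_sorted_def sorted_desc_def)
  then show "sorted_wrt (\<lambda>a b. b \<le> a) (map Some (take (lval ns k i) (col i)))"
    unfolding sorted_wrt_map by (rule sorted_wrt_mono_rel[rotated]) simp
qed (auto simp: sorted_wrt_iff_nth_less)

lemma mwise_tuple_merger_input: "mwise_tuple m (kval ns k 1) k merger_input"
  unfolding mwise_tuple_def
proof (intro conjI ballI allI impI)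
  show "1 \<le> k" by (rule k_pos)
  have "real k \<le> real m * real (ns ! 0)"
    using n_le_m_mult_ns0 k_le_n by (metis le_trans of_nat_le_iff of_nat_mult)
  moreover have "real k * 1 \<le> real k * real m" using m_pos by (intro mult_left_mono) auto
  ultimately show "real k / real m \<le> real (kval ns k 1)"
    using m_pos by (auto simp: kval_def divide_le_eq mult.commute min_def)
  show "length merger_input = m" by (simp add: merger_input_def)
  fix i assume i: "i \<in> {1..m}"
  show "length (merger_input ! (i - 1)) = min (kval ns k 1) (k div i)"
    unfolding merger_input_nth[OF i] length_padded_prefix[OF i]
    by (simp add: kval_def min.assoc min.absorb2 div_le_dividend)
  show "sorted_desc (merger_input ! (i - 1))"
    unfolding merger_input_nth[OF i] using i by (rule sorted_padded_prefix)
next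
  fix i j assume i: "1 \<le> i \<and> i < m" and j: "j \<in> {1..length (merger_input ! i)}"
  then have i1: "i \<in> {1..m}" and i2: "i + 1 \<in> {1..m}" by auto
  have input_i: "merger_input ! i = padded_prefix (i + 1)"
    using merger_input_nth[OF i2] by simp
  have p: "j - 1 < kval ns k (i + 1)" "j - 1 < kval ns k i"
    using j i2 length_padded_prefix[OF i2] kval_def div_le_mono2[of i "i + 1" k] i
    by (auto simp: input_i kval_def)
  show "merger_input ! i ! (j - 1) \<le> merger_input ! (i - 1) ! (j - 1)"
  proof (cases "j - 1 < lval ns k (i + 1)")
    case True
    then have "j - 1 < lval ns k i" using lval_Suc_le[of i] i by simp
    with True show ?thesis
      unfolding input_i merger_input_nth[OF i1] padded_prefix_nth[OF i1 p(2)] padded_prefix_nth[OF i2 p(1)]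
      using col_Suc_nth_le[of i "j - 1"] i by simp
  next
    case False
    then show ?thesis unfolding input_i padded_prefix_nth[OF i2 p(1)] by simp
  qed
qed

lemma sum_length_merger_input: "sum_list (map length merger_input) = (\<Sum>i = 1..m. kval ns k i)"
proof -
  have "sum_list (map length merger_input) = sum_list (map (kval ns k) [1..<m + 1])"
    unfolding merger_input_def map_map
    by (intro arg_cong[where f = sum_list] map_cong refl) (simp add: length_padded_prefix del: upt_Suc)
  then show ?thesis
    by (simp add: interv_sum_list_conv_sum_set_nat atLeastLessThanSuc_atLeastAtMost del: upt_Suc)
qed

lemma map_the_filter_merger_input:
  "map the (filter (\<lambda>x. x \<noteq> None) (concat merger_input)) = col_prefixes"
  by (simp add: merger_input_def padded_prefix_def col_prefixes_def filter_concat map_concat comp_def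
      del: upt_Suc)

lemma mset_col_prefixes_suffixes: "mset col_prefixes + mset col_suffixes = mset xs"
proof -
  have "mset col_prefixes + mset col_suffixes
      = (\<Sum>i = 1..<m + 1. mset (take (lval ns k i) (col i)))
        + (\<Sum>i = 1..<m + 1. mset (drop (lval ns k i) (col i)))"
    unfolding col_prefixes_def col_suffixes_def mset_concat_map_upt ..
  also have "\<dots> = (\<Sum>i = 1..<m + 1. mset (col i))"
    by (simp only: sum.distrib[symmetric] mset_append[symmetric] append_take_drop_id)
  also have "{1..<m + 1} = {1..m}" by auto
  also have "(\<Sum>i = 1..m. mset (col i)) = (\<Sum>i = 1..m. mset (tcol ns xs i))"
    by (rule sum.cong[OF refl]) (rule mset_col)
  also have "\<dots> = mset xs" by (rule sum_mset_tcol)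
  finally show ?thesis .
qed

lemma count_ge_col_prefixes:
  "count_ge v col_prefixes = (\<Sum>i = 1..m. count_ge v (take (lval ns k i) (col i)))"
  by (simp add: col_prefixes_def count_ge_concat_map_upt atLeastLessThanSuc_atLeastAtMost
      del: upt_Suc)

lemma k_le_count_ge_col_prefixes:
  assumes "x \<in> set col_suffixes"
  shows "k \<le> count_ge x col_prefixes"
proof -
  obtain i where i: "i \<in> {1..m}" and x: "x \<in> set (drop (lval ns k i) (col i))"
    using assms by (auto simp: col_suffixes_def less_Suc_eq_le simp del: upt_Suc)
  then have "drop (lval ns k i) (col i) \<noteq> []" by auto
  then have lval_less: "lval ns k i < ns ! (i - 1)" using length_col[OF i] by simp
  then have lval_i: "lval ns k i = k div i" by (simp add: lval_def)
  have "k div i + 1 \<le> count_ge x (col i)"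
    using top_k_sorted_count_ge_drop[OF top_k_sorted_col[OF i] _ x] lval_i lval_le[of i] length_col[OF i]
    by simp
  have "min (k div i + 1) (k div i') \<le> count_ge x (take (lval ns k i') (col i'))"
    if i': "i' \<in> {1..i}" for i'
  proof -
    have i'm: "i' \<in> {1..m}" using i' i by auto
    have "k div i + 1 \<le> count_ge x (col i')"
      using \<open>k div i + 1 \<le> count_ge x (col i)\<close> count_ge_col_antimono[of i' i x] i' i by simp
    moreover have "ns ! (i - 1) \<le> ns ! (i' - 1)" using i' i by (intro ns_antimono) auto
    then have "min (k div i + 1) (k div i') \<le> lval ns k i'"
      using lval_less lval_i by (simp add: lval_def)
    moreover have "min (count_ge x (col i')) (lval ns k i') \<le> count_ge x (take (lval ns k i') (col i'))"
      using top_k_sorted_count_ge_take[OF top_k_sorted_col[OF i'm]] length_col[OF i'm] lval_le[of i']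
      by simp
    ultimately show ?thesis by linarith
  qed
  then have "(\<Sum>i' = 1..i. min (k div i + 1) (k div i'))
      \<le> (\<Sum>i' = 1..i. count_ge x (take (lval ns k i') (col i')))"
    by (rule sum_mono)
  also have "\<dots> \<le> count_ge x col_prefixes"
    unfolding count_ge_col_prefixes using i by (intro sum_mono2) auto
  finally show ?thesis using le_sum_min_div[of i k] i by simp
qed

lemma k_le_length_col_prefixes: "k \<le> length col_prefixes"
proof (cases col_suffixes)
  case Nil
  have "length col_prefixes + length col_suffixes = n"
    using arg_cong[OF mset_col_prefixes_suffixes, of size] length_xs by simp
  then show ?thesis using Nil k_le_n by simp
next
  case (Cons x _)
  then show ?thesis
    using k_le_count_ge_col_prefixes[of x] count_ge_le_length[of x col_prefixes] by simp
qed

lemma mset_merged_prefixes: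
  "mset (map the (filter (\<lambda>x. x \<noteq> None) (run_net N (concat merger_input)))) = mset col_prefixes"
proof -
  have "mset (map the (filter (\<lambda>x. x \<noteq> None) (run_net N ys)))
      = mset (map the (filter (\<lambda>x. x \<noteq> None) ys))" for ys :: "'a option list"
    by (simp add: mset_run_net)
  then show ?thesis by (simp only: map_the_filter_merger_input)
qed

lemma mw_step_eq:
  "mw_step m mw_merge ns k G xs =
     map the (filter (\<lambda>x. x \<noteq> None)
       (run_net (mw_merge (\<Sum>i = 1..m. kval ns k i) (kval ns k 1) k) (concat merger_input)))
     @ col_suffixes"
  unfolding mw_step_def Let_def merger_input_def padded_prefix_def[abs_def] col_def col_suffixes_def
  by simp

lemma mset_mw_step: "mset (mw_step m mw_merge ns k G xs) = mset xs"
  unfolding mw_step_eq mset_append mset_merged_prefixes by (rule mset_col_prefixes_suffixes)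

lemma top_k_sorted_mw_step:
  assumes "is_mw_merger TYPE('a option) m (kval ns k 1) k (\<Sum>i = 1..m. kval ns k i)
      (mw_merge (\<Sum>i = 1..m. kval ns k i) (kval ns k 1) k)"
  shows "top_k_sorted k (mw_step m mw_merge ns k G xs)"
proof -
  let ?res = "run_net (mw_merge (\<Sum>i = 1..m. kval ns k i) (kval ns k 1) k) (concat merger_input)"
  let ?A = "map the (filter (\<lambda>x. x \<noteq> None) ?res)"
  have "top_k_sorted k ?res"
    using assms mwise_tuple_merger_input sum_length_merger_input unfolding is_mw_merger_def by blast
  moreover have length_A: "length ?A = length col_prefixes"
    using mset_merged_prefixes by (metis size_mset)
  then have "k \<le> length (filter (\<lambda>x. x \<noteq> None) ?res)"
    using k_le_length_col_prefixes by simp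
  ultimately have "top_k_sorted k ?A"
    by (rule top_k_sorted_map_the_filter_not_None)
  moreover have "k \<le> length ?A" using length_A k_le_length_col_prefixes by simp
  moreover have "k \<le> count_ge b ?A" if "b \<in> set col_suffixes" for b
    using k_le_count_ge_col_prefixes[OF that] count_ge_mset_eq[OF mset_merged_prefixes] by simp
  ultimately show ?thesis unfolding mw_step_eq by (rule top_k_sorted_append)
qed

end

lemma mw_sel_correct:
  fixes mw_merge :: "nat \<Rightarrow> nat \<Rightarrow> nat \<Rightarrow> cnet" and F :: "'a::linorder list \<Rightarrow> 'a list"
  assumes merger: "\<forall>s c k. is_mw_merger TYPE('a option) m c k s (mw_merge s c k)"
    and "mw_sel m mw_merge n k F"
  shows "\<forall>xs. length xs = n \<longrightarrow> top_k_sorted k (F xs) \<and> mset (F xs) = mset xs"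
  using assms(2)
proof (induction rule: mw_sel.induct)
  case (base n N)
  show ?case
  proof (intro allI impI)
    fix xs :: "'a list" assume length_xs: "length xs = n"
    have mset_eq: "mset (run_net N xs) = mset xs" by (rule mset_run_net)
    then have "set (run_net N xs) = set xs" by (metis set_mset_mset)
    moreover have "xs \<noteq> []" using base length_xs by auto
    ultimately have "top_k_sorted 1 (run_net N xs)"
      using base length_xs by (intro top_k_sorted_1_if_hd_Max) auto
    with mset_eq show "top_k_sorted 1 (run_net N xs) \<and> mset (run_net N xs) = mset xs" by simp
  qed
next
  case (step k n ns G)
  show ?case
  proof (intro allI impI)
    fix xs :: "'a list" assume length_xs: "length xs = n"
    interpret selection_step m n ns xs k G
    proof
      show "valid_split m n ns" "length xs = n" "1 \<le> k" "k \<le> n"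
        using step(1-3) length_xs by auto
      show "top_k_sorted (lval ns k i) (G i ys) \<and> mset (G i ys) = mset ys"
        if "i \<in> {1..m}" "1 \<le> lval ns k i" "length ys = ns ! (i - 1)" for i ys
        using step(4) that by blast
    qed
    show "top_k_sorted k (mw_step m mw_merge ns k G xs) \<and> mset (mw_step m mw_merge ns k G xs) = mset xs"
      using top_k_sorted_mw_step[of mw_merge, OF merger[rule_format]] mset_mw_step by simp
  qed
qed

theorem mainTheorem3:
  fixes m n k :: nat
    and mw_merge :: "nat \<Rightarrow> nat \<Rightarrow> nat \<Rightarrow> cnet"
    and F :: "'a::linorder list \<Rightarrow> 'a list"
    and xs :: "'a list"
  assumes "2 \<le> m"
    and "\<forall>s c k. is_mw_merger TYPE('a option) m c k s (mw_merge s c k)"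
    and "mw_sel m mw_merge n k F"
    and "1 \<le> k" and "k \<le> n"
    and "length xs = n"
  shows "top_k_sorted k (F xs)"
  using mw_sel_correct[OF assms(2,3)] assms(6) by simp

end
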